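(* Let $R$ be a local ring and $s\in R$ a central element. Then $A\in M_2(R;s)$ is strongly nil clean if and only if one of the following holds: (1) $A\in Nil\big(M_2(R;s)\big)$; (2) $I_2-A\in Nil\big(M_2(R;s)\big)$; (3) $s\in U(R)$ and $A$ is similar to $\left[\begin{smallmatrix} v&0\\ 0&w\end{smallmatrix}\right]$ for some $v\in 1+Nil(R)$, $w\in Nil(R)$; (4) $s\in J(R)$ and $A$ is similar to $\left[\begin{smallmatrix} v&0\\ 0&w\end{smallmatrix}\right]$ or to $\left[\begin{smallmatrix} w&0\\ 0&v\end{smallmatrix}\right]$ for some $v\in 1+Nil(R)$, $w\in Nil(R)$.
   Context: All rings are associative with identity. A ring $R$ is local if $R/J(R)$ is a division ring, where $J(R)$ is the Jacobson radical; $U(R)$ is the group of units and $Nil(T)$ the set of nilpotent elements of a ring $T$. For a ring $R$ and a central element $s\in R$, $M_2(R;s)$ denotes the ring whose elements are the $2\times 2$ arrays $\left[\begin{smallmatrix} a&b\\ c&d\end{smallmatrix}\right]$ with $a,b,c,d\in R$, with componentwise addition and multiplication $\left[\begin{smallmatrix} a&b\\ c&d\end{smallmatrix}\right]\left[\begin{smallmatrix} a'&b'\\ c'&d'\end{smallmatrix}\right]=\left[\begin{smallmatrix} aa'+s^2bc'&ab'+bd'\\ ca'+dc'&s^2cb'+dd'\end{smallmatrix}\right]$, with identity $I_2$. Two elements $A,B\in M_2(R;s)$ are similar if $B=P^{-1}AP$ for some unit $P$ of $M_2(R;s)$. An element $a$ of a ring $T$ is strongly nil clean if there is an idempotent $e\in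 T$ with $ae=ea$ and $a-e\in Nil(T)$. *)

theory Defs
  imports Main
begin

definition is_unit :: "'a::ring_1 \<Rightarrow> bool" where
  "is_unit x \<longleftrightarrow> (\<exists>y. x * y = 1 \<and> y * x = 1)"

definition nilpotent :: "'a::ring_1 \<Rightarrow> bool" where
  "nilpotent x \<longleftrightarrow> (\<exists>n. x ^ n = 0)"

definition central :: "'a::ring_1 \<Rightarrow> bool" where
  "central s \<longleftrightarrow> (\<forall>r. s * r = r * s)"

definition left_ideal :: "'a::ring_1 set \<Rightarrow> bool" where
  "left_ideal I \<longleftrightarrow> 0 \<in> I \<and> (\<forall>x\<in>I. \<forall>y\<in>I. x - y \<in> I) \<and> (\<forall>r. \<forall>x\<in>I. r * x \<in> I)"

definition maximal_left_ideal :: "'a::ring_1 set \<Rightarrow> bool" where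
  "maximal_left_ideal M \<longleftrightarrow> left_ideal M \<and> M \<noteq> UNIV \<and>
     (\<forall>I. left_ideal I \<and> M \<subseteq> I \<and> I \<noteq> UNIV \<longrightarrow> I = M)"

definition jacobson :: "'a::ring_1 set" where
  "jacobson = \<Inter> {M. maximal_left_ideal M}"

text \<open>R is local iff R/J(R) is a division ring (unfolded: nonzero ring in which every
  element outside J has a two-sided inverse modulo J).\<close>
definition local_ring :: "'a::ring_1 itself \<Rightarrow> bool" where
  "local_ring _ \<longleftrightarrow> (1::'a) \<notin> jacobson \<and>
     (\<forall>x::'a. x \<notin> jacobson \<longrightarrow> (\<exists>y. x * y - 1 \<in> jacobson \<and> y * x - 1 \<in> jacobson))"

datatype 'a m2 = M2 'a 'a 'a 'a

fun m2_mult :: "'a::ring_1 \<Rightarrow> 'a m2 \<Rightarrow> 'a m2 \<Rightarrow> 'a m2" where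
  "m2_mult s (M2 a b c d) (M2 a' b' c' d') =
     M2 (a * a' + s^2 * b * c') (a * b' + b * d') (c * a' + d * c') (s^2 * c * b' + d * d')"

fun m2_add :: "'a::ring_1 m2 \<Rightarrow> 'a m2 \<Rightarrow> 'a m2" where
  "m2_add (M2 a b c d) (M2 a' b' c' d') = M2 (a + a') (b + b') (c + c') (d + d')"

fun m2_diff :: "'a::ring_1 m2 \<Rightarrow> 'a m2 \<Rightarrow> 'a m2" where
  "m2_diff (M2 a b c d) (M2 a' b' c' d') = M2 (a - a') (b - b') (c - c') (d - d')"

definition m2_zero :: "'a::ring_1 m2" where
  "m2_zero = M2 0 0 0 0"

definition m2_one :: "'a::ring_1 m2" where
  "m2_one = M2 1 0 0 1"

fun m2_pow :: "'a::ring_1 \<Rightarrow> 'a m2 \<Rightarrow> nat \<Rightarrow> 'a m2" where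
  "m2_pow s A 0 = m2_one"
| "m2_pow s A (Suc n) = m2_mult s A (m2_pow s A n)"

definition m2_nilpotent :: "'a::ring_1 \<Rightarrow> 'a m2 \<Rightarrow> bool" where
  "m2_nilpotent s A \<longleftrightarrow> (\<exists>n. m2_pow s A n = m2_zero)"

definition m2_idempotent :: "'a::ring_1 \<Rightarrow> 'a m2 \<Rightarrow> bool" where
  "m2_idempotent s E \<longleftrightarrow> m2_mult s E E = E"

definition m2_strongly_nil_clean :: "'a::ring_1 \<Rightarrow> 'a m2 \<Rightarrow> bool" where
  "m2_strongly_nil_clean s A \<longleftrightarrow>
     (\<exists>E. m2_idempotent s E \<and> m2_mult s A E = m2_mult s E A \<and> m2_nilpotent s (m2_diff A E))"

definition m2_similar :: "'a::ring_1 \<Rightarrow> 'a m2 \<Rightarrow> 'a m2 \<Rightarrow> bool" where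
  "m2_similar s A B \<longleftrightarrow> (\<exists>P Q. m2_mult s P Q = m2_one \<and> m2_mult s Q P = m2_one \<and>
      B = m2_mult s Q (m2_mult s A P))"

end

theory Submission
  imports Defs
begin

text \<open>Over a local ring every idempotent E = [a b; c d] of M_2(R;s) is 0, I_2, or similar to
  diag(1,0) or diag(0,1): if a and d both lie in J(R), then I_2 - E is a unit (its Schur complement
  is a unit) annihilating E, so E = 0; if a and 1 - d are units, an explicit unit conjugates E to
  diag(1,0); the other two cases follow by passing to I_2 - E. Conjugating a strongly nil clean
  decomposition A = E + N accordingly, A becomes similar to a matrix commuting with diag(1,0) or
  diag(0,1), hence diagonal, of the form diag(v,w) or diag(w,v) with v - 1 and w nilpotent. If s is
  a unit the two forms are similar via [0 1; s^-2 0]; otherwise s lies in J(R), R being local.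
  Conversely all the listed matrices are visibly strongly nil clean, and strong nil cleanness is
  invariant under similarity.\<close>

lemma left_ideal_zero: "left_ideal I \<Longrightarrow> (0::'a::ring_1) \<in> I"
  by (simp add: left_ideal_def)

lemma left_ideal_diff: "left_ideal I \<Longrightarrow> x \<in> I \<Longrightarrow> y \<in> I \<Longrightarrow> (x::'a::ring_1) - y \<in> I"
  by (simp add: left_ideal_def)

lemma left_ideal_mult: "left_ideal I \<Longrightarrow> x \<in> I \<Longrightarrow> r * (x::'a::ring_1) \<in> I"
  by (simp add: left_ideal_def)

lemma left_ideal_uminus: "left_ideal I \<Longrightarrow> x \<in> I \<Longrightarrow> - (x::'a::ring_1) \<in> I"
  using left_ideal_diff[of I 0 x] left_ideal_zero by fastforce

lemma left_ideal_add: "left_ideal I \<Longrightarrow> x \<in> I \<Longrightarrow> y \<in> I \<Longrightarrow> (x::'a::ring_1) + y \<in> I"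
  using left_ideal_diff[of I x "- y"] left_ideal_uminus by fastforce

lemma left_ideal_eq_UNIV_if_one: "left_ideal I \<Longrightarrow> (1::'a::ring_1) \<in> I \<Longrightarrow> I = UNIV"
  using left_ideal_mult[of I 1] by auto

lemma left_ideal_Union_chain:
  fixes C :: "'a::ring_1 set set"
  assumes "C \<noteq> {}" "\<forall>I\<in>C. left_ideal I" "chain\<^sub>\<subseteq> C"
  shows "left_ideal (\<Union>C)"
  unfolding left_ideal_def
proof (intro conjI ballI allI)
  show "0 \<in> \<Union>C" using assms(1,2) left_ideal_zero by blast
next
  fix x y assume "x \<in> \<Union>C" "y \<in> \<Union>C"
  then obtain I where "I \<in> C" "x \<in> I" "y \<in> I"
    using assms(3) unfolding chain_subset_def by blast
  then show "x - y \<in> \<Union>C" using assms(2) left_ideal_diff by blast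
next
  fix r x assume "x \<in> \<Union>C"
  then show "r * x \<in> \<Union>C" using assms(2) left_ideal_mult by blast
qed

lemma maximal_left_ideal_extend:
  fixes L :: "'a::ring_1 set"
  assumes "left_ideal L" "1 \<notin> L"
  shows "\<exists>M. maximal_left_ideal M \<and> L \<subseteq> M"
proof -
  let ?A = "{I. left_ideal I \<and> L \<subseteq> I \<and> (1::'a) \<notin> I}"
  have "\<exists>U\<in>?A. \<forall>X\<in>C. X \<subseteq> U" if "C \<in> chains ?A" for C
  proof (cases "C = {}")
    case True
    then show ?thesis using assms by blast
  next
    case False
    with that have "\<Union>C \<in> ?A"
      using left_ideal_Union_chain[of C] by (auto simp: chains_def)
    then show ?thesis by blast
  qed
  then obtain M where M: "M \<in> ?A" "\<forall>X\<in>?A. M \<subseteq> X \<longrightarrow> X = M"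
    using Zorn_Lemma2[of ?A] by blast
  then have "maximal_left_ideal M"
    unfolding maximal_left_ideal_def using left_ideal_eq_UNIV_if_one by blast
  with M show ?thesis by blast
qed

lemma left_ideal_jacobson: "left_ideal (jacobson::'a::ring_1 set)"
  unfolding left_ideal_def jacobson_def maximal_left_ideal_def by auto

lemma jacobson_one_plus_left_invertible:
  fixes j :: "'a::ring_1"
  assumes "j \<in> jacobson"
  shows "\<exists>u. u * (1 + j) = 1"
proof (rule ccontr)
  assume no_inverse: "\<nexists>u. u * (1 + j) = 1"
  let ?L = "range (\<lambda>r. r * (1 + j))"
  have "left_ideal ?L"
    unfolding left_ideal_def
  proof (intro conjI ballI allI)
    show "0 \<in> ?L" by (metis mult_zero_left rangeI)
  next
    fix x y assume "x \<in> ?L" "y \<in> ?L"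
    then show "x - y \<in> ?L" by (auto simp flip: left_diff_distrib)
  next
    fix r x assume "x \<in> ?L"
    then show "r * x \<in> ?L" by (auto simp flip: mult.assoc)
  qed
  moreover have "1 \<notin> ?L" using no_inverse by auto
  ultimately obtain M where M: "maximal_left_ideal M" "?L \<subseteq> M"
    using maximal_left_ideal_extend by blast
  then have "left_ideal M" "j \<in> M" "1 + j \<in> M"
    using assms rangeI[of "\<lambda>r. r * (1 + j)" 1]
    by (auto simp: maximal_left_ideal_def jacobson_def)
  then have "1 \<in> M" using left_ideal_diff[of M "1 + j" j] by simp
  then show False using M(1) left_ideal_eq_UNIV_if_one by (auto simp: maximal_left_ideal_def)
qed

lemma is_unit_one_plus_jacobson:
  fixes j :: "'a::ring_1"
  assumes "j \<in> jacobson"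
  shows "is_unit (1 + j)"
proof -
  obtain u where u: "u * (1 + j) = 1" using jacobson_one_plus_left_invertible[OF assms] by blast
  then have "u = 1 + - (u * j)" by (simp add: algebra_simps)
  moreover have "- (u * j) \<in> jacobson"
    using assms left_ideal_jacobson left_ideal_mult left_ideal_uminus by blast
  ultimately obtain w where w: "w * u = 1" using jacobson_one_plus_left_invertible by metis
  have "w = w * (u * (1 + j))" using u by simp
  also have "\<dots> = 1 + j" using w by (simp flip: mult.assoc)
  finally show ?thesis using u w unfolding is_unit_def by auto
qed

lemma is_unit_if_left_right_inverse: "(l::'a::ring_1) * x = 1 \<Longrightarrow> x * r = 1 \<Longrightarrow> is_unit x"
  unfolding is_unit_def by (metis mult.assoc mult_1 mult.right_neutral)

lemma local_ring_is_unit_iff: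
  fixes x :: "'a::ring_1"
  assumes local: "local_ring TYPE('a)"
  shows "is_unit x \<longleftrightarrow> x \<notin> jacobson"
proof
  assume "is_unit x"
  then obtain y where "y * x = 1" unfolding is_unit_def by blast
  then show "x \<notin> jacobson"
    using local left_ideal_jacobson left_ideal_mult unfolding local_ring_def by metis
next
  assume "x \<notin> jacobson"
  then obtain y where "x * y - 1 \<in> jacobson" "y * x - 1 \<in> jacobson"
    using local unfolding local_ring_def by blast
  then have "is_unit (x * y)" "is_unit (y * x)"
    using is_unit_one_plus_jacobson by fastforce+
  then obtain p q where "x * (y * p) = 1" "(q * y) * x = 1"
    unfolding is_unit_def by (metis mult.assoc)
  then show "is_unit x" using is_unit_if_left_right_inverse by blast
qed

lemma local_ring_one_minus_jacobson:
  fixes x :: "'a::ring_1"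
  assumes "local_ring TYPE('a)" "x \<in> jacobson"
  shows "1 - x \<notin> jacobson"
  using assms left_ideal_add[OF left_ideal_jacobson, of "1 - x" x]
  unfolding local_ring_def by auto

text \<open>In a local ring the Jacobson radical, defined via left ideals, is also a right ideal:
  an element of it with a right inverse would be a unit.\<close>

lemma local_ring_jacobson_mult_right:
  fixes x :: "'a::ring_1"
  assumes local: "local_ring TYPE('a)" and x: "x \<in> jacobson"
  shows "x * r \<in> jacobson"
proof (rule ccontr)
  assume "x * r \<notin> jacobson"
  then obtain u where "x * r * u = 1"
    using local_ring_is_unit_iff[OF local] unfolding is_unit_def by blast
  then have xy: "x * (r * u) = 1" by (simp add: mult.assoc)
  then have "r * u \<notin> jacobson"
    using local x left_ideal_jacobson left_ideal_mult unfolding local_ring_def by metis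
  then obtain z where "(r * u) * z = 1"
    using local_ring_is_unit_iff[OF local] unfolding is_unit_def by blast
  then have "(r * u) * x = 1" using xy by (metis mult.assoc mult_1 mult.right_neutral)
  then have "is_unit x" using xy is_unit_if_left_right_inverse by blast
  then show False using local_ring_is_unit_iff[OF local] x by blast
qed

lemma central_power2_commute: "central s \<Longrightarrow> (s::'a::ring_1)^2 * x = x * s^2"
  unfolding central_def power2_eq_square by (metis mult.assoc)

lemma central_power2_left_commute: "central s \<Longrightarrow> x * ((s::'a::ring_1)^2 * y) = s^2 * (x * y)"
  using central_power2_commute[of s x] by (metis mult.assoc)

definition m2_unit :: "'a::ring_1 \<Rightarrow> 'a m2 \<Rightarrow> bool" where
  "m2_unit s P \<longleftrightarrow> (\<exists>Q. m2_mult s P Q = m2_one \<and> m2_mult s Q P = m2_one)"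

lemma m2_mult_one_left [simp]: "m2_mult s m2_one X = X"
  by (cases X) (simp add: m2_one_def)

lemma m2_mult_one_right [simp]: "m2_mult s X m2_one = X"
  by (cases X) (simp add: m2_one_def)

lemma m2_mult_zero_left [simp]: "m2_mult s m2_zero X = m2_zero"
  by (cases X) (simp add: m2_zero_def)

lemma m2_mult_zero_right [simp]: "m2_mult s X m2_zero = m2_zero"
  by (cases X) (simp add: m2_zero_def)

lemma m2_diff_self [simp]: "m2_diff X X = m2_zero"
  by (cases X) (simp add: m2_zero_def)

lemma m2_diff_zero [simp]: "m2_diff X m2_zero = X"
  by (cases X) (simp add: m2_zero_def)

lemma m2_mult_diff_left: "m2_mult s X (m2_diff Y Z) = m2_diff (m2_mult s X Y) (m2_mult s X Z)"
  by (cases X; cases Y; cases Z) (simp add: algebra_simps)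

lemma m2_mult_diff_right: "m2_mult s (m2_diff Y Z) X = m2_diff (m2_mult s Y X) (m2_mult s Z X)"
  by (cases X; cases Y; cases Z) (simp add: algebra_simps)

lemma m2_pow_neg:
  "m2_pow s (m2_diff m2_zero X) n =
     (if even n then m2_pow s X n else m2_diff m2_zero (m2_pow s X n))"
proof (induction n)
  case (Suc n)
  have "m2_mult s (m2_diff m2_zero X) (m2_diff m2_zero Y) = m2_mult s X Y"
    and "m2_mult s (m2_diff m2_zero X) Y = m2_diff m2_zero (m2_mult s X Y)" for Y
    by (cases X; cases Y; simp add: m2_zero_def)+
  with Suc show ?case by simp
qed simp

lemma m2_nilpotent_diff_commute: "m2_nilpotent s (m2_diff X Y) \<longleftrightarrow> m2_nilpotent s (m2_diff Y X)"
proof -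
  have "m2_diff Y X = m2_diff m2_zero (m2_diff X Y)" for X Y :: "'a m2"
    by (cases X; cases Y) (simp add: m2_zero_def)
  then have "m2_nilpotent s (m2_diff Y X)" if "m2_nilpotent s (m2_diff X Y)" for X Y :: "'a m2"
    using that m2_pow_neg[of s "m2_diff X Y"] unfolding m2_nilpotent_def by (metis m2_diff_self)
  then show ?thesis by blast
qed

lemma m2_pow_diag: "m2_pow s (M2 x 0 0 y) n = M2 (x^n) 0 0 (y^n)"
  by (induction n) (auto simp: m2_one_def)

lemma m2_nilpotent_diag_iff: "m2_nilpotent s (M2 x 0 0 y) \<longleftrightarrow> nilpotent x \<and> nilpotent y"
proof
  assume "m2_nilpotent s (M2 x 0 0 y)"
  then show "nilpotent x \<and> nilpotent y"
    unfolding m2_nilpotent_def nilpotent_def m2_pow_diag m2_zero_def by auto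
next
  assume "nilpotent x \<and> nilpotent y"
  then obtain n m where "x^n = 0" "y^m = 0" unfolding nilpotent_def by auto
  then have "x^(n + m) = 0" "y^(n + m) = 0" by (auto simp: power_add)
  then show "m2_nilpotent s (M2 x 0 0 y)"
    unfolding m2_nilpotent_def m2_pow_diag m2_zero_def by auto
qed

lemma m2_conj_diff:
  "m2_mult s Q (m2_mult s (m2_diff X Y) P) = m2_diff (m2_mult s Q (m2_mult s X P)) (m2_mult s Q (m2_mult s Y P))"
  by (simp add: m2_mult_diff_left m2_mult_diff_right)

lemma m2_idempotent_one_minus:
  assumes "m2_idempotent s E"
  shows "m2_idempotent s (m2_diff m2_one E)"
proof -
  obtain a b c d where E: "E = M2 a b c d" by (cases E)
  have "a * a + s^2 * b * c = a" "a * b + b * d = b" "c * a + d * c = c" "s^2 * c * b + d * d = d"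
    using assms unfolding m2_idempotent_def E by simp_all
  then show ?thesis unfolding m2_idempotent_def E m2_one_def by (simp add: algebra_simps)
qed

context
  fixes s :: "'a::ring_1"
  assumes central: "central s"
begin

lemma m2_mult_assoc: "m2_mult s (m2_mult s X Y) Z = m2_mult s X (m2_mult s Y Z)"
  by (cases X; cases Y; cases Z) (simp add: algebra_simps central_power2_left_commute[OF central])

lemma m2_conj_mult:
  assumes "m2_mult s P Q = m2_one"
  shows "m2_mult s (m2_mult s Q (m2_mult s X P)) (m2_mult s Q (m2_mult s Y P)) =
    m2_mult s Q (m2_mult s (m2_mult s X Y) P)"
  using assms by (simp add: m2_mult_assoc flip: m2_mult_assoc[of P Q])

lemma m2_pow_conj:
  assumes "m2_mult s P Q = m2_one"
  shows "m2_pow s (m2_mult s Q (m2_mult s X P)) (Suc n) = m2_mult s Q (m2_mult s (m2_pow s X (Suc n)) P)"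
  by (induction n) (simp_all add: m2_conj_mult[OF assms])

lemma m2_nilpotent_conj:
  assumes "m2_mult s P Q = m2_one" "m2_nilpotent s X"
  shows "m2_nilpotent s (m2_mult s Q (m2_mult s X P))"
proof -
  obtain n where "m2_pow s X n = m2_zero" using assms(2) unfolding m2_nilpotent_def by auto
  then have "m2_pow s X (Suc n) = m2_zero" by simp
  then have "m2_pow s (m2_mult s Q (m2_mult s X P)) (Suc n) = m2_zero"
    by (simp only: m2_pow_conj[OF assms(1)] m2_mult_zero_left m2_mult_zero_right)
  then show ?thesis unfolding m2_nilpotent_def by blast
qed

lemma m2_unit_mult:
  assumes "m2_unit s P" "m2_unit s R"
  shows "m2_unit s (m2_mult s P R)"
proof -
  obtain Q S where "m2_mult s P Q = m2_one" "m2_mult s Q P = m2_one"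
    and "m2_mult s R S = m2_one" "m2_mult s S R = m2_one"
    using assms unfolding m2_unit_def by blast
  then have "m2_mult s (m2_mult s P R) (m2_mult s S Q) = m2_one"
    and "m2_mult s (m2_mult s S Q) (m2_mult s P R) = m2_one"
    by (simp_all add: m2_mult_assoc flip: m2_mult_assoc[of R S] m2_mult_assoc[of Q P])
  then show ?thesis unfolding m2_unit_def by blast
qed

lemma m2_similar_sym: "m2_similar s A B \<Longrightarrow> m2_similar s B A"
  unfolding m2_similar_def
  by (metis m2_mult_assoc m2_mult_one_left m2_mult_one_right)

lemma m2_similar_trans: "m2_similar s A B \<Longrightarrow> m2_similar s B C \<Longrightarrow> m2_similar s A C"
  unfolding m2_similar_def
  by (metis m2_mult_assoc m2_mult_one_left)

lemma m2_similar_of_intertwine: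
  assumes "m2_unit s U" "m2_mult s E U = m2_mult s U F"
  shows "m2_similar s E F"
proof -
  obtain V where UV: "m2_mult s U V = m2_one" "m2_mult s V U = m2_one"
    using assms(1) unfolding m2_unit_def by blast
  then have "F = m2_mult s V (m2_mult s E U)"
    using assms(2) by (simp flip: m2_mult_assoc)
  with UV show ?thesis unfolding m2_similar_def by blast
qed

lemma m2_similar_one_minus: "m2_similar s X Y \<Longrightarrow> m2_similar s (m2_diff m2_one X) (m2_diff m2_one Y)"
  unfolding m2_similar_def by (metis m2_conj_diff m2_mult_one_left)

lemma m2_conj_commuting_nil_diff:
  assumes "m2_mult s P Q = m2_one"
    and "m2_mult s A E = m2_mult s E A" "m2_nilpotent s (m2_diff A E)"
  shows "m2_mult s (m2_mult s Q (m2_mult s A P)) (m2_mult s Q (m2_mult s E P)) =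
      m2_mult s (m2_mult s Q (m2_mult s E P)) (m2_mult s Q (m2_mult s A P))"
    and "m2_nilpotent s (m2_diff (m2_mult s Q (m2_mult s A P)) (m2_mult s Q (m2_mult s E P)))"
  using assms m2_nilpotent_conj[OF assms(1,3)] by (simp_all add: m2_conj_mult m2_conj_diff)

lemma m2_strongly_nil_clean_similar:
  assumes "m2_similar s A B" "m2_strongly_nil_clean s A"
  shows "m2_strongly_nil_clean s B"
proof -
  obtain P Q where PQ: "m2_mult s P Q = m2_one" and B: "B = m2_mult s Q (m2_mult s A P)"
    using assms(1) unfolding m2_similar_def by blast
  obtain E where E: "m2_idempotent s E" "m2_mult s A E = m2_mult s E A" "m2_nilpotent s (m2_diff A E)"
    using assms(2) unfolding m2_strongly_nil_clean_def by blast
  have "m2_idempotent s (m2_mult s Q (m2_mult s E P))"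
    using E(1) unfolding m2_idempotent_def by (simp add: m2_conj_mult[OF PQ])
  with m2_conj_commuting_nil_diff[OF PQ E(2,3)] show ?thesis
    unfolding m2_strongly_nil_clean_def B by blast
qed

text \<open>Block LDU factorisation: a matrix with invertible corner and invertible Schur complement
  is a product of two unitriangular and one invertible diagonal matrix.\<close>

lemma m2_unit_schur:
  assumes ai: "\<alpha> * ai = 1" "ai * \<alpha> = 1"
    and si: "S * si = 1" "si * S = 1"
    and S: "S = \<delta> - s^2 * \<gamma> * ai * \<beta>"
  shows "m2_unit s (M2 \<alpha> \<beta> \<gamma> \<delta>)"
proof -
  have L: "m2_unit s (M2 1 0 (\<gamma> * ai) 1)"
    unfolding m2_unit_def by (rule exI[of _ "M2 1 0 (- (\<gamma> * ai)) 1"]) (simp add: m2_one_def)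
  have D: "m2_unit s (M2 \<alpha> 0 0 S)"
    unfolding m2_unit_def by (rule exI[of _ "M2 ai 0 0 si"]) (simp add: m2_one_def ai si)
  have U: "m2_unit s (M2 1 (ai * \<beta>) 0 1)"
    unfolding m2_unit_def by (rule exI[of _ "M2 1 (- (ai * \<beta>)) 0 1"]) (simp add: m2_one_def)
  have "\<alpha> * (ai * x) = x" "\<gamma> * ai * \<alpha> = \<gamma>" for x
    using ai by (metis mult.assoc mult_1) (metis ai(2) mult.assoc mult.right_neutral)
  then have "M2 \<alpha> \<beta> \<gamma> \<delta> =
      m2_mult s (M2 1 0 (\<gamma> * ai) 1) (m2_mult s (M2 \<alpha> 0 0 S) (M2 1 (ai * \<beta>) 0 1))"
    by (simp add: S mult.assoc ai)
  then show ?thesis using m2_unit_mult L D U by metis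
qed

lemma m2_similar_swap_diag:
  assumes "is_unit s"
  shows "m2_similar s (M2 w 0 0 v) (M2 v 0 0 w)"
proof -
  obtain si where si: "s * si = 1" "si * s = 1" using assms unfolding is_unit_def by blast
  define t where "t = si * si"
  have st: "s^2 * t = 1" unfolding t_def power2_eq_square using si by (metis mult.assoc mult_1)
  then have ts: "t * s^2 = 1" using central_power2_commute[OF central, of t] by simp
  have "s^2 * x * t = x" "s^2 * (t * x) = x" for x
    using central_power2_commute[OF central, of x] st by (metis mult.assoc mult.right_neutral mult_1)+
  then have "M2 v 0 0 w = m2_mult s (M2 0 1 t 0) (m2_mult s (M2 w 0 0 v) (M2 0 1 t 0))"
    by (simp add: mult.assoc)
  moreover have "m2_mult s (M2 0 1 t 0) (M2 0 1 t 0) = m2_one"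
    using st ts by (simp add: m2_one_def)
  ultimately show ?thesis unfolding m2_similar_def by blast
qed

lemma m2_similar_diag_of_commuting_nil_diff:
  assumes "m2_similar s E (M2 x 0 0 y)" "{x, y} = {0, 1}"
    and "m2_mult s A E = m2_mult s E A" "m2_nilpotent s (m2_diff A E)"
  shows "\<exists>p t. m2_similar s A (M2 p 0 0 t) \<and> nilpotent (p - x) \<and> nilpotent (t - y)"
proof -
  obtain P Q where PQ: "m2_mult s P Q = m2_one" "m2_mult s Q P = m2_one"
    and F: "M2 x 0 0 y = m2_mult s Q (m2_mult s E P)"
    using assms(1) unfolding m2_similar_def by blast
  obtain p q r t where B: "m2_mult s Q (m2_mult s A P) = M2 p q r t" by (cases "m2_mult s Q (m2_mult s A P)")
  have "m2_mult s (M2 p q r t) (M2 x 0 0 y) = m2_mult s (M2 x 0 0 y) (M2 p q r t)"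
    and nil: "m2_nilpotent s (m2_diff (M2 p q r t) (M2 x 0 0 y))"
    using m2_conj_commuting_nil_diff[OF PQ(1) assms(3,4)] by (simp_all only: B F)
  then have "q = 0" "r = 0" using assms(2) by (auto simp: doubleton_eq_iff)
  with nil have "nilpotent (p - x)" "nilpotent (t - y)" by (simp_all add: m2_nilpotent_diag_iff)
  moreover have "m2_similar s A (M2 p q r t)" using PQ B[symmetric] unfolding m2_similar_def by blast
  ultimately show ?thesis using \<open>q = 0\<close> \<open>r = 0\<close> by blast
qed

end

context
  fixes s :: "'a::ring_1"
  assumes central: "central s" and local: "local_ring TYPE('a)"
begin

lemma m2_idempotent_eq_zero:
  assumes "m2_idempotent s (M2 a b c d)" and a: "a \<in> jacobson" and d: "d \<in> jacobson"
  shows "M2 a b c d = m2_zero"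
proof -
  have e: "a * a + s^2 * b * c = a" "a * b + b * d = b" "c * a + d * c = c" "s^2 * c * b + d * d = d"
    using assms(1) unfolding m2_idempotent_def by simp_all
  have "a * b + b * d \<in> jacobson"
    using local_ring_jacobson_mult_right[OF local a] left_ideal_jacobson d left_ideal_add left_ideal_mult
    by blast
  then have b: "b \<in> jacobson" using e(2) by simp
  obtain ai where ai: "(1 - a) * ai = 1" "ai * (1 - a) = 1"
    using local_ring_is_unit_iff[OF local] local_ring_one_minus_jacobson[OF local a]
    unfolding is_unit_def by blast
  define S where "S = (1 - d) - s^2 * (- c) * ai * (- b)"
  have "d + s^2 * c * ai * b \<in> jacobson"
    using left_ideal_jacobson d b left_ideal_add left_ideal_mult by blast
  then have "S \<notin> jacobson"
    using local_ring_one_minus_jacobson[OF local] by (simp add: S_def diff_diff_eq)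
  then obtain si where si: "S * si = 1" "si * S = 1"
    using local_ring_is_unit_iff[OF local] unfolding is_unit_def by blast
  have "m2_unit s (M2 (1 - a) (- b) (- c) (1 - d))"
    using m2_unit_schur[OF central ai si S_def] .
  then obtain W where W: "m2_mult s W (M2 (1 - a) (- b) (- c) (1 - d)) = m2_one"
    unfolding m2_unit_def by blast
  have "m2_mult s (M2 (1 - a) (- b) (- c) (1 - d)) (M2 a b c d) = m2_zero"
    using e by (simp add: m2_zero_def algebra_simps)
  then show ?thesis
    using W m2_mult_assoc[OF central, of W] by (metis m2_mult_one_left m2_mult_zero_right)
qed

lemma m2_idempotent_similar_diag_one_zero:
  assumes "m2_idempotent s (M2 a b c d)" and a: "a \<notin> jacobson" and d: "1 - d \<notin> jacobson"
  shows "m2_similar s (M2 a b c d) (M2 1 0 0 0)"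
proof -
  have e: "a * a + s^2 * b * c = a" "a * b + b * d = b" "c * a + d * c = c" "s^2 * c * b + d * d = d"
    using assms(1) unfolding m2_idempotent_def by simp_all
  obtain ai where ai: "a * ai = 1" "ai * a = 1"
    using local_ring_is_unit_iff[OF local] a unfolding is_unit_def by blast
  obtain ui where ui: "ui * (1 - d) = 1"
    using local_ring_is_unit_iff[OF local] d unfolding is_unit_def by blast
  define S where "S = (1 - d) - s^2 * c * ai * (- b)"
  have "(1 - d) * c = c * a" using e(3) by (simp add: algebra_simps)
  have "(1 - d) * (s^2 * c * ai * b) = s^2 * ((1 - d) * c) * ai * b"
    using central_power2_left_commute[OF central] by (simp add: mult.assoc)
  also have "\<dots> = s^2 * (c * a) * ai * b"
    by (simp only: \<open>(1 - d) * c = c * a\<close>)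
  also have "\<dots> = s^2 * c * b"
    using ai by (simp add: mult.assoc)
  also have "\<dots> = d - d * d" using e(4) by (simp add: algebra_simps)
  finally have "(1 - d) * (S - 1) = 0" unfolding S_def by (simp add: algebra_simps)
  then have "S = 1" using ui by (metis mult.assoc mult_1 mult_zero_right right_minus_eq)
  then have "m2_unit s (M2 a (- b) c (1 - d))"
    using m2_unit_schur[OF central ai, of S 1] S_def by simp
  moreover have "m2_mult s (M2 a b c d) (M2 a (- b) c (1 - d)) =
      m2_mult s (M2 a (- b) c (1 - d)) (M2 1 0 0 0)"
    using e by (simp add: algebra_simps)
  ultimately show ?thesis by (rule m2_similar_of_intertwine[OF central])
qed

text \<open>The four cases on a and d below are exhaustive because x and 1 - x never both lie in the
  Jacobson radical of a local ring; two of them reduce to the other two for the idempotent I - E.\<close>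

lemma m2_idempotent_cases:
  assumes "m2_idempotent s E"
  shows "E = m2_zero \<or> E = m2_one \<or> m2_similar s E (M2 1 0 0 0) \<or> m2_similar s E (M2 0 0 0 1)"
proof -
  obtain a b c d where E: "E = M2 a b c d" by (cases E)
  have E': "m2_diff m2_one E = M2 (1 - a) (- b) (- c) (1 - d)"
    unfolding E m2_one_def by simp
  have idem': "m2_idempotent s (M2 (1 - a) (- b) (- c) (1 - d))"
    using m2_idempotent_one_minus[OF assms] by (simp only: E')
  have EE: "E = m2_diff m2_one (m2_diff m2_one E)"
    unfolding E m2_one_def by simp
  consider "a \<notin> jacobson" "1 - d \<notin> jacobson" | "1 - a \<notin> jacobson" "d \<notin> jacobson"
    | "a \<in> jacobson" "d \<in> jacobson" | "1 - a \<in> jacobson" "1 - d \<in> jacobson"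
    using local_ring_one_minus_jacobson[OF local] by (metis diff_diff_cancel)
  then show ?thesis
  proof cases
    case 1
    then show ?thesis using m2_idempotent_similar_diag_one_zero assms E by blast
  next
    case 2
    then have "m2_similar s (m2_diff m2_one E) (M2 1 0 0 0)"
      using m2_idempotent_similar_diag_one_zero[OF idem'] E' by simp
    then have "m2_similar s E (m2_diff m2_one (M2 1 0 0 0))"
      using m2_similar_one_minus[OF central] EE by metis
    then show ?thesis by (simp add: m2_one_def)
  next
    case 3
    then show ?thesis using m2_idempotent_eq_zero assms E by blast
  next
    case 4
    then have "m2_diff m2_one E = m2_zero" using m2_idempotent_eq_zero[OF idem'] E' by simp
    then show ?thesis using EE by simp
  qed
qed

lemma m2_strongly_nil_clean_cases:
  assumes "m2_strongly_nil_clean s A"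
  shows "m2_nilpotent s A \<or> m2_nilpotent s (m2_diff m2_one A) \<or>
    (\<exists>v w. nilpotent (v - 1) \<and> nilpotent w \<and>
      (m2_similar s A (M2 v 0 0 w) \<or> m2_similar s A (M2 w 0 0 v)))"
proof -
  obtain E where E: "m2_idempotent s E" "m2_mult s A E = m2_mult s E A" "m2_nilpotent s (m2_diff A E)"
    using assms unfolding m2_strongly_nil_clean_def by blast
  have diag: "\<exists>p t. m2_similar s A (M2 p 0 0 t) \<and> nilpotent (p - x) \<and> nilpotent (t - y)"
    if "m2_similar s E (M2 x 0 0 y)" "{x, y} = {0, 1}" for x y
    using m2_similar_diag_of_commuting_nil_diff[OF central that E(2,3)] .
  from m2_idempotent_cases[OF E(1)] show ?thesis
  proof (elim disjE)
    assume "m2_similar s E (M2 1 0 0 0)"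
    then show ?thesis using diag[of 1 0] by auto
  next
    assume "m2_similar s E (M2 0 0 0 1)"
    then show ?thesis using diag[of 0 1] by auto
  qed (use E(3) m2_nilpotent_diff_commute in auto)
qed

end

lemma m2_strongly_nil_clean_diag:
  assumes "nilpotent (v - 1)" "nilpotent w"
  shows "m2_strongly_nil_clean s (M2 v 0 0 w)" "m2_strongly_nil_clean s (M2 w 0 0 v)"
proof -
  show "m2_strongly_nil_clean s (M2 v 0 0 w)"
    unfolding m2_strongly_nil_clean_def m2_idempotent_def
    using assms m2_nilpotent_diag_iff[of s "v - 1" w] by (intro exI[of _ "M2 1 0 0 0"]) simp
  show "m2_strongly_nil_clean s (M2 w 0 0 v)"
    unfolding m2_strongly_nil_clean_def m2_idempotent_def
    using assms m2_nilpotent_diag_iff[of s w "v - 1"] by (intro exI[of _ "M2 0 0 0 1"]) simp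
qed

lemma m2_strongly_nil_clean_if_nilpotent: "m2_nilpotent s A \<Longrightarrow> m2_strongly_nil_clean s A"
  unfolding m2_strongly_nil_clean_def m2_idempotent_def by (intro exI[of _ m2_zero]) simp

lemma m2_strongly_nil_clean_if_unipotent:
  "m2_nilpotent s (m2_diff m2_one A) \<Longrightarrow> m2_strongly_nil_clean s A"
  unfolding m2_strongly_nil_clean_def m2_idempotent_def
  by (intro exI[of _ m2_one]) (simp add: m2_nilpotent_diff_commute)

lemma m2_strongly_nil_clean_iff:
  fixes s :: "'a::ring_1"
  assumes "central s" "local_ring TYPE('a)"
  shows "m2_strongly_nil_clean s A \<longleftrightarrow>
    m2_nilpotent s A \<or> m2_nilpotent s (m2_diff m2_one A) \<or>
    (\<exists>v w. nilpotent (v - 1) \<and> nilpotent w \<and>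
      (m2_similar s A (M2 v 0 0 w) \<or> m2_similar s A (M2 w 0 0 v)))"
  using m2_strongly_nil_clean_cases[OF assms] m2_strongly_nil_clean_if_nilpotent
    m2_strongly_nil_clean_if_unipotent m2_strongly_nil_clean_diag
    m2_strongly_nil_clean_similar[OF assms(1)] m2_similar_sym[OF assms(1)]
  by meson

theorem lemma2p9:
  fixes s :: "'a::ring_1" and A :: "'a m2"
  assumes "local_ring TYPE('a)"
    and "central s"
  shows "m2_strongly_nil_clean s A \<longleftrightarrow>
     m2_nilpotent s A
   \<or> m2_nilpotent s (m2_diff m2_one A)
   \<or> (is_unit s \<and> (\<exists>v w. nilpotent (v - 1) \<and> nilpotent w \<and> m2_similar s A (M2 v 0 0 w)))
   \<or> (s \<in> jacobson \<and> (\<exists>v w. nilpotent (v - 1) \<and> nilpotent w \<and>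
          (m2_similar s A (M2 v 0 0 w) \<or> m2_similar s A (M2 w 0 0 v))))"
proof -
  have swap: "m2_similar s A (M2 v 0 0 w)" if "is_unit s" "m2_similar s A (M2 w 0 0 v)" for v w
    using m2_similar_trans[OF assms(2) that(2) m2_similar_swap_diag[OF assms(2) that(1)]] .
  have "is_unit s \<or> s \<in> jacobson" using local_ring_is_unit_iff[OF assms(1)] by blast
  with swap show ?thesis unfolding m2_strongly_nil_clean_iff[OF assms(2,1)] by blast
qed

end
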